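(* Suppose that $G$ is a graph on $[n]$ with $\langle G\rangle_{K_4} = K_n$, and let $1 \leqslant L \leqslant n$. Then there exists a clique $K \subset K_n$ which is internally spanned by $G$, with $L \leqslant v(K) \leqslant 3L$.
   Context: $\langle G\rangle_{K_4}$ is the closure of $G$ under the $K_4$-bootstrap process on $K_n$: repeatedly add any edge which is the only missing edge of some copy of $K_4$. A clique $K \subset K_n$ is internally spanned by $G$ if $\langle G \cap K\rangle_{K_4} = K$, where $G \cap K$ is the set of edges of $G$ with both endpoints in $V(K)$. *)

theory Defs
  imports Main
begin

text \<open>Graphs are sets of edges; an edge is a two-element vertex set.\<close>

definition complete :: "'a set \<Rightarrow> 'a set set" where
  "complete S = {{u, v} | u v. u \<in> S \<and> v \<in> S \<and> u \<noteq> v}"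

inductive_set k4_closure :: "'a set set \<Rightarrow> 'a set set" for E :: "'a set set" where
  base: "e \<in> E \<Longrightarrow> e \<in> k4_closure E"
| step: "\<lbrakk> distinct [a, b, c, d];
           {a, c} \<in> k4_closure E; {a, d} \<in> k4_closure E;
           {b, c} \<in> k4_closure E; {b, d} \<in> k4_closure E;
           {c, d} \<in> k4_closure E \<rbrakk> \<Longrightarrow> {a, b} \<in> k4_closure E"

definition restrict_graph :: "'a set set \<Rightarrow> 'a set \<Rightarrow> 'a set set" where
  "restrict_graph G S = {e \<in> G. e \<subseteq> S}"

definition internally_spanned :: "'a set set \<Rightarrow> 'a set \<Rightarrow> bool" where
  "internally_spanned G S \<longleftrightarrow> k4_closure (restrict_graph G S) = complete S"

end

theory Submission
  imports Defs
begin

text \<open>Suppose no vertex set of size between L and 3L spans its clique. Three spanned sets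
  that pairwise share a vertex (distinct vertices for distinct pairs) span their union, and
  a union of three sets of size less than L has size at most 3L, hence less than L. By
  induction along the bootstrap process, every edge of the closure therefore lies in a
  spanned set of size less than L. A largest such set misses some vertex v, and merging it
  with the small spanned sets around two of its edges to v produces a larger one, so the
  whole vertex set must have fewer than L elements.\<close>

lemma doubleton_mem_complete_iff:
  "{u, v} \<in> complete X \<longleftrightarrow> u \<in> X \<and> v \<in> X \<and> u \<noteq> v"
  unfolding complete_def by (auto simp: doubleton_eq_iff)

lemma completeE:
  assumes "e \<in> complete X"
  obtains u v where "e = {u, v}" "u \<in> X" "v \<in> X" "u \<noteq> v"
  using assms unfolding complete_def by blast

lemma k4_closure_mono: "E \<subseteq> F \<Longrightarrow> k4_closure E \<subseteq> k4_closure F"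
proof
  fix e assume "e \<in> k4_closure E" "E \<subseteq> F"
  then show "e \<in> k4_closure F"
    by (induction rule: k4_closure.induct) (auto intro: k4_closure.intros)
qed

lemma k4_closure_subset_complete: "E \<subseteq> complete S \<Longrightarrow> k4_closure E \<subseteq> complete S"
proof
  fix e assume "e \<in> k4_closure E" "E \<subseteq> complete S"
  then show "e \<in> complete S"
    by (induction rule: k4_closure.induct) (auto simp: doubleton_mem_complete_iff)
qed

lemma complete_Un_subset_k4_closure:
  assumes X: "complete X \<subseteq> k4_closure E" and Y: "complete Y \<subseteq> k4_closure E"
    and "p \<in> X \<inter> Y" "q \<in> X \<inter> Y" "p \<noteq> q"
  shows "complete (X \<union> Y) \<subseteq> k4_closure E"
proof
  fix e assume "e \<in> complete (X \<union> Y)"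
  then obtain u v where e: "e = {u, v}" "u \<in> X \<union> Y" "v \<in> X \<union> Y" "u \<noteq> v"
    by (rule completeE)
  have cross: "{x, y} \<in> k4_closure E" if "x \<in> X - Y" "y \<in> Y - X" for x y
  proof -
    have distinct: "distinct [x, y, p, q]" using that assms by auto
    have "{x, p} \<in> complete X" "{x, q} \<in> complete X" "{p, q} \<in> complete X"
      "{y, p} \<in> complete Y" "{y, q} \<in> complete Y"
      using that assms distinct by (auto simp: doubleton_mem_complete_iff)
    then show ?thesis
      using k4_closure.step[OF distinct] X Y by blast
  qed
  show "e \<in> k4_closure E"
  proof (cases "u \<in> X \<and> v \<in> X \<or> u \<in> Y \<and> v \<in> Y")
    case True
    then show ?thesis using e X Y by (auto simp: doubleton_mem_complete_iff)
  next
    case False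
    then have "u \<in> X - Y \<and> v \<in> Y - X \<or> v \<in> X - Y \<and> u \<in> Y - X"
      using e by blast
    then show ?thesis using cross e by (metis insert_commute)
  qed
qed

lemma complete_insert_subset_k4_closure:
  assumes X: "complete X \<subseteq> k4_closure E" and "a \<in> X" "c \<in> X" "a \<noteq> c"
    and "{a, d} \<in> k4_closure E" "{c, d} \<in> k4_closure E" "d \<noteq> a" "d \<noteq> c"
  shows "complete (insert d X) \<subseteq> k4_closure E"
proof
  fix e assume "e \<in> complete (insert d X)"
  then obtain u v where e: "e = {u, v}" "u \<in> insert d X" "v \<in> insert d X" "u \<noteq> v"
    by (rule completeE)
  have to_d: "{x, d} \<in> k4_closure E" if "x \<in> X" "x \<noteq> d" for x
  proof (cases "x = a \<or> x = c")
    case True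
    then show ?thesis using assms by auto
  next
    case False
    have distinct: "distinct [x, d, a, c]" using False that assms by auto
    have "{x, a} \<in> complete X" "{x, c} \<in> complete X" "{a, c} \<in> complete X"
      using that assms distinct by (auto simp: doubleton_mem_complete_iff)
    moreover have "{d, a} \<in> k4_closure E" "{d, c} \<in> k4_closure E"
      using assms by (auto simp: insert_commute)
    ultimately show ?thesis
      using k4_closure.step[OF distinct] X by blast
  qed
  show "e \<in> k4_closure E"
  proof (cases "u \<in> X \<and> v \<in> X")
    case True
    then show ?thesis using e X by (auto simp: doubleton_mem_complete_iff)
  next
    case False
    then have "u = d \<and> v \<in> X \<or> v = d \<and> u \<in> X" using e by blast
    then show ?thesis using to_d e by (metis insert_commute)
  qed
qed

text \<open>One half of being internally spanned; the other half is automatic as soon as G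
  consists of genuine edges.\<close>

definition spans :: "'a set set \<Rightarrow> 'a set \<Rightarrow> bool" where
  "spans G X \<longleftrightarrow> complete X \<subseteq> k4_closure (restrict_graph G X)"

lemma internally_spanned_iff_spans:
  assumes "G \<subseteq> complete V"
  shows "internally_spanned G X \<longleftrightarrow> spans G X"
proof -
  have "restrict_graph G X \<subseteq> complete X"
  proof
    fix e assume "e \<in> restrict_graph G X"
    then have "e \<in> complete V" "e \<subseteq> X" using assms unfolding restrict_graph_def by auto
    then show "e \<in> complete X" by (auto elim!: completeE simp: doubleton_mem_complete_iff)
  qed
  then show ?thesis
    using k4_closure_subset_complete unfolding internally_spanned_def spans_def by blast
qed

lemma spans_doubleton:
  assumes "{u, v} \<in> G"
  shows "spans G {u, v}"
proof -
  have "complete {u, v} \<subseteq> {{u, v}}" unfolding complete_def by auto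
  moreover have "{u, v} \<in> restrict_graph G {u, v}"
    using assms unfolding restrict_graph_def by simp
  ultimately show ?thesis
    unfolding spans_def by (auto intro: k4_closure.base)
qed

lemma spans_empty: "spans G {}"
  unfolding spans_def complete_def by simp

lemma spans_singleton: "spans G {x}"
  unfolding spans_def complete_def by simp

lemma complete_subset_k4_closure_if_spans:
  assumes "spans G A" "A \<subseteq> B"
  shows "complete A \<subseteq> k4_closure (restrict_graph G B)"
proof -
  have "restrict_graph G A \<subseteq> restrict_graph G B"
    using assms(2) unfolding restrict_graph_def by auto
  then show ?thesis
    using assms(1) k4_closure_mono unfolding spans_def by blast
qed

text \<open>Three spanned sets arranged like a triangle on the vertices p, q, r span their union:
  the edge qr lets r join A, and the resulting set meets B and then C in an edge.\<close>

lemma spans_Un3: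
  assumes A: "spans G A" and B: "spans G B" and C: "spans G C"
    and "distinct [p, q, r]" "p \<in> A" "q \<in> A" "p \<in> B" "r \<in> B" "q \<in> C" "r \<in> C"
  shows "spans G (A \<union> B \<union> C)"
proof -
  let ?H = "k4_closure (restrict_graph G (A \<union> B \<union> C))"
  have hA: "complete A \<subseteq> ?H"
    by (rule complete_subset_k4_closure_if_spans[OF A]) auto
  have hB: "complete B \<subseteq> ?H"
    by (rule complete_subset_k4_closure_if_spans[OF B]) auto
  have hC: "complete C \<subseteq> ?H"
    by (rule complete_subset_k4_closure_if_spans[OF C]) auto
  have pr: "{p, r} \<in> ?H" and qr: "{q, r} \<in> ?H"
    using hB hC assms by (auto simp: doubleton_mem_complete_iff)
  have "complete (insert r A) \<subseteq> ?H"
    by (rule complete_insert_subset_k4_closure[OF hA, of p q r]) (use assms pr qr in auto)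
  then have "complete (insert r A \<union> B) \<subseteq> ?H"
    by (rule complete_Un_subset_k4_closure[OF _ hB, where p = p and q = r]) (use assms in auto)
  then have "complete (insert r A \<union> B \<union> C) \<subseteq> ?H"
    by (rule complete_Un_subset_k4_closure[OF _ hC, where p = q and q = r]) (use assms in auto)
  moreover have "insert r A \<union> B \<union> C = A \<union> B \<union> C" using assms by auto
  ultimately show ?thesis unfolding spans_def by simp
qed

locale no_medium_spanned_set =
  fixes G :: "'a set set" and V :: "'a set" and L :: nat
  assumes graph: "G \<subseteq> complete V"
    and finite_V: "finite V"
    and no_medium: "\<And>X. X \<subseteq> V \<Longrightarrow> spans G X \<Longrightarrow> card X \<le> 3 * L \<Longrightarrow> card X < L"
begin

definition small_spanned :: "'a set \<Rightarrow> bool" where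
  "small_spanned X \<longleftrightarrow> X \<subseteq> V \<and> spans G X \<and> card X < L"

lemma L_pos: "0 < L"
  using no_medium[of "{}"] by (simp add: spans_empty)

lemma one_less_L:
  assumes "x \<in> V"
  shows "1 < L"
  using no_medium[of "{x}"] assms L_pos by (simp add: spans_singleton)

lemma small_spanned_Un3:
  assumes "small_spanned A" "small_spanned B" "small_spanned C"
    and "distinct [p, q, r]" "p \<in> A" "q \<in> A" "p \<in> B" "r \<in> B" "q \<in> C" "r \<in> C"
  shows "small_spanned (A \<union> B \<union> C)"
proof -
  have "card (A \<union> B \<union> C) \<le> card A + card B + card C"
    by (meson card_Un_le add_le_mono1 le_trans)
  then have "card (A \<union> B \<union> C) \<le> 3 * L"
    using assms unfolding small_spanned_def by linarith
  then show ?thesis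
    using assms spans_Un3[of G A B C p q r] no_medium unfolding small_spanned_def by auto
qed

lemma k4_closure_edge_in_small_spanned:
  "e \<in> k4_closure G \<Longrightarrow> \<exists>X. small_spanned X \<and> e \<subseteq> X"
proof (induction rule: k4_closure.induct)
  case (base e)
  then have "e \<in> complete V" using graph by (rule subsetD[rotated])
  then obtain u v where uv: "e = {u, v}" "u \<in> V" "v \<in> V" "u \<noteq> v"
    by (rule completeE)
  then have "e \<subseteq> V" "spans G e" using base spans_doubleton by auto
  moreover have "card e \<le> 3 * L" using uv L_pos by simp
  ultimately have "small_spanned e" using no_medium unfolding small_spanned_def by simp
  then show ?case by blast
next
  case (step a b c d)
  obtain A where A: "small_spanned A" "{a, c} \<subseteq> A" using step.IH(1) by blast
  obtain B where B: "small_spanned B" "{a, d} \<subseteq> B" using step.IH(2) by blast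
  obtain C where C: "small_spanned C" "{b, c} \<subseteq> C" using step.IH(3) by blast
  obtain D where D: "small_spanned D" "{b, d} \<subseteq> D" using step.IH(4) by blast
  obtain E where E: "small_spanned E" "{c, d} \<subseteq> E" using step.IH(5) by blast
  have "small_spanned (A \<union> B \<union> E)"
    by (rule small_spanned_Un3[of A B E a c d]) (use A B E step.hyps(1) in simp_all)
  then have "small_spanned (A \<union> B \<union> E \<union> C \<union> D)"
    by (rule small_spanned_Un3[of _ C D c d b]) (use A B C D E step.hyps(1) in auto)
  then show ?case using A C by blast
qed

lemma small_spanned_extend:
  assumes closure: "k4_closure G = complete V"
    and S: "small_spanned S" and "x \<in> S" "y \<in> S" "x \<noteq> y" "v \<in> V - S"
  obtains T where "small_spanned T" "S \<subset> T"
proof -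
  have "x \<in> V" "y \<in> V" using S \<open>x \<in> S\<close> \<open>y \<in> S\<close> unfolding small_spanned_def by auto
  then have xv: "{x, v} \<in> k4_closure G" and yv: "{y, v} \<in> k4_closure G"
    using assms by (auto simp: doubleton_mem_complete_iff)
  obtain T1 where T1: "small_spanned T1" "{x, v} \<subseteq> T1"
    using k4_closure_edge_in_small_spanned[OF xv] by blast
  obtain T2 where T2: "small_spanned T2" "{y, v} \<subseteq> T2"
    using k4_closure_edge_in_small_spanned[OF yv] by blast
  have "small_spanned (S \<union> T1 \<union> T2)"
    by (rule small_spanned_Un3[of S T1 T2 x y v]) (use assms T1 T2 in auto)
  moreover have "S \<subset> S \<union> T1 \<union> T2" using assms T1 by auto
  ultimately show thesis by (rule that)
qed

lemma card_less_if_k4_closure_complete: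
  assumes closure: "k4_closure G = complete V"
  shows "card V < L"
proof (rule ccontr)
  assume "\<not> card V < L"
  then have L_le: "L \<le> card V" by simp
  have finite: "finite X" if "small_spanned X" for X
    using that finite_V finite_subset unfolding small_spanned_def by blast
  have "V \<noteq> {}" using L_le L_pos by auto
  then have "\<not> card V \<le> Suc 0" using L_le one_less_L by fastforce
  then obtain x y where "x \<in> V" "y \<in> V" "x \<noteq> y"
    using card_le_Suc0_iff_eq[OF finite_V] by blast
  then have "{x, y} \<in> k4_closure G"
    using closure \<open>x \<in> V\<close> by (simp add: doubleton_mem_complete_iff)
  then obtain S0 where S0: "small_spanned S0" "{x, y} \<subseteq> S0"
    using k4_closure_edge_in_small_spanned by blast
  have "\<exists>S. (small_spanned S \<and> {x, y} \<subseteq> S) \<and>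
      (\<forall>T. small_spanned T \<and> {x, y} \<subseteq> T \<longrightarrow> card T \<le> card S)"
    by (rule ex_has_greatest_nat[of "\<lambda>X. small_spanned X \<and> {x, y} \<subseteq> X" S0 card L])
      (use S0 in \<open>auto simp: small_spanned_def\<close>)
  then obtain S where S: "small_spanned S" "{x, y} \<subseteq> S"
    and S_max: "\<And>T. small_spanned T \<Longrightarrow> {x, y} \<subseteq> T \<Longrightarrow> card T \<le> card S"
    by blast
  have "\<not> V \<subseteq> S"
  proof
    assume "V \<subseteq> S"
    then have "card V \<le> card S" using card_mono[OF finite[OF S(1)]] by blast
    then show False using L_le S(1) unfolding small_spanned_def by simp
  qed
  then obtain v where "v \<in> V - S" by blast
  moreover have "x \<in> S" "y \<in> S" using S(2) by auto
  ultimately obtain T where T: "small_spanned T" "S \<subset> T"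
    using small_spanned_extend[OF closure S(1) _ _ \<open>x \<noteq> y\<close>] by blast
  then have "card S < card T" using psubset_card_mono[OF finite] by blast
  moreover have "card T \<le> card S" using S_max T S(2) by blast
  ultimately show False by simp
qed

end

theorem lemma4p4:
  fixes G :: "nat set set" and n L :: nat
  assumes "G \<subseteq> complete {1..n}"
    and "k4_closure G = complete {1..n}"
    and "1 \<le> L" and "L \<le> n"
  shows "\<exists>S. S \<subseteq> {1..n} \<and> internally_spanned G S \<and> L \<le> card S \<and> card S \<le> 3 * L"
proof (rule ccontr)
  assume no_spanned: "\<not> ?thesis"
  interpret no_medium_spanned_set G "{1..n}" L
  proof
    fix X assume "X \<subseteq> {1..n}" "spans G X" "card X \<le> 3 * L"
    then show "card X < L"
      using no_spanned internally_spanned_iff_spans[OF assms(1)] by (meson not_less)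
  qed (use assms(1) in auto)
  have "card {1..n} < L" using assms(2) by (rule card_less_if_k4_closure_complete)
  then show False using assms(4) by simp
qed

end
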